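(* Let $S$ be a nonempty set of graphs on $\Pi$. Then $\mathrm{eqdom}(S)$-set agreement is solvable in one round on the closed-above model generated by $S$.
   Context: Fix a set of $n$ processes $\Pi=\{p_1,\dots,p_n\}$. A graph is a directed graph with vertex set $\Pi$; every graph is assumed to contain all self-loops $(p,p)$. For a graph $G$ and $p\in\Pi$, $Out_G(p)=\{q:(p,q)\in E(G)\}$ and $In_G(p)=\{q:(q,p)\in E(G)\}$ (both contain $p$); for $P\subseteq\Pi$, $Out_G(P)=\bigcup_{p\in P}Out_G(p)$. Computation proceeds in failure-free, communication-closed rounds: in each round $r$ a graph $G_r$ is chosen and each process $p$ receives in round $r$ exactly the round-$r$ messages of the processes in $In_{G_r}(p)$. A communication model is a set of infinite sequences of graphs; an execution is allowed iff its sequence of round graphs belongs to the model. For a graph $G$, $\uparrow G=\{H: E(H)\supseteq E(G)\}$. The closed-above model generated by a set $S$ of graphs is $(\bigcup_{G\in S}\uparrow G)^\omega$. In $k$-set agreement each process starts with an input from a totally ordered set $V_{in}$ and must decide a value so that every decided value is the input of some process and at most $k$ distinct values are decided. $k$-set agreement is solvable in $r$ rounds on a model if some algorithm guarantees, in every allowed execution and for every input assignment, that all processes decide after $r$ rounds satisfying these conditions. For a graph $G$, $\mathrm{eqdom}(G)=\min\{i\in[1,n]: \forall P\subseteq\Pi,\ |P|=i\Rightarrow Out_G(P)=\Pi\}$, and for a set $S$ of graphs $\mathrm{eqdom}(S)=\max_{G\in S}\mathrm{eqdom}(G)$. *)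

theory Defs
  imports Main
begin

text \<open>Processes are the elements of a finite type 'p (so Pi = UNIV, n = its cardinality).
A graph is its edge set, required to contain all self-loops.\<close>

type_synonym 'p graph = "('p \<times> 'p) set"

definition is_graph :: "'p graph \<Rightarrow> bool" where
  "is_graph G \<longleftrightarrow> (\<forall>p. (p, p) \<in> G)"

definition Out :: "'p graph \<Rightarrow> 'p \<Rightarrow> 'p set" where
  "Out G p = {q. (p, q) \<in> G}"

definition In :: "'p graph \<Rightarrow> 'p \<Rightarrow> 'p set" where
  "In G p = {q. (q, p) \<in> G}"

definition OutSet :: "'p graph \<Rightarrow> 'p set \<Rightarrow> 'p set" where
  "OutSet G P = (\<Union>p\<in>P. Out G p)"

definition up :: "'p graph \<Rightarrow> 'p graph set" where
  "up G = {H. is_graph H \<and> G \<subseteq> H}"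

text \<open>Communication model: set of infinite sequences of graphs; sigma r is the graph
of round r+1.\<close>
definition closed_above_model :: "'p graph set \<Rightarrow> (nat \<Rightarrow> 'p graph) set" where
  "closed_above_model S = {\<sigma>. \<forall>r. \<sigma> r \<in> (\<Union>G\<in>S. up G)}"

definition eqdom :: "('p::finite) graph \<Rightarrow> nat" where
  "eqdom G = Min {i. 1 \<le> i \<and> i \<le> card (UNIV :: 'p set) \<and> (\<forall>P::'p set. card P = i \<longrightarrow> OutSet G P = UNIV)}"

definition eqdom_set :: "('p::finite) graph set \<Rightarrow> nat" where
  "eqdom_set S = Max (eqdom ` S)"

definition view1 :: "'p graph \<Rightarrow> ('p \<Rightarrow> 'v) \<Rightarrow> 'p \<Rightarrow> ('p \<Rightarrow> 'v option)" where
  "view1 G x p = (\<lambda>q. if q \<in> In G p then Some (x q) else None)"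

text \<open>Full-information algorithms are the most general deterministic one-round algorithms.
k-set agreement is solvable in one round on model M if some such algorithm satisfies
validity and k-agreement in every allowed execution and for every input assignment.\<close>
definition kset_solvable_one_round ::
  "nat \<Rightarrow> (nat \<Rightarrow> 'p graph) set \<Rightarrow> ('v::linorder) itself \<Rightarrow> bool" where
  "kset_solvable_one_round k M TYPE_V \<longleftrightarrow>
     (\<exists>dec :: 'p \<Rightarrow> ('p \<Rightarrow> 'v option) \<Rightarrow> 'v.
        \<forall>\<sigma>\<in>M. \<forall>x :: 'p \<Rightarrow> 'v.
          (\<forall>p. dec p (view1 (\<sigma> 0) x p) \<in> range x) \<and>
          card (range (\<lambda>p. dec p (view1 (\<sigma> 0) x p))) \<le> k)"

end

theory Submission
  imports Defs
begin

text \<open>Every process decides the smallest input it hears of. Suppose more than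
  \<open>k = eqdom G\<close> values were decided, and let \<open>m\<close> be the largest. Pick \<open>k\<close> processes
  whose inputs are other decided values, all smaller than \<open>m\<close>. They dominate \<open>G\<close>,
  hence also the round graph \<open>H \<supseteq> G\<close>, so the process deciding \<open>m\<close> hears one of them
  and would have decided something smaller.\<close>

lemma OutSet_mono: "G \<subseteq> H \<Longrightarrow> OutSet G P \<subseteq> OutSet H P"
  unfolding OutSet_def Out_def by auto

lemma OutSet_UNIV_of_graph: "is_graph G \<Longrightarrow> OutSet G UNIV = UNIV"
  unfolding OutSet_def Out_def is_graph_def by auto

lemma In_self: "is_graph G \<Longrightarrow> p \<in> In G p"
  unfolding is_graph_def In_def by auto

lemma Min_In_mem_range:
  fixes x :: "'p::finite \<Rightarrow> 'v::linorder"
  assumes "is_graph H"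
  shows "Min (x ` In H p) \<in> range x"
proof -
  have "Min (x ` In H p) \<in> x ` In H p"
    using In_self[OF assms] by (intro Min_in) auto
  then show ?thesis
    by blast
qed

lemma eqdom_dominating:
  fixes G :: "('p::finite) graph"
  assumes "is_graph G" and "card P = eqdom G"
  shows "OutSet G P = UNIV"
proof -
  let ?A = "{i. 1 \<le> i \<and> i \<le> card (UNIV :: 'p set) \<and>
                (\<forall>P::'p set. card P = i \<longrightarrow> OutSet G P = UNIV)}"
  have "card (UNIV :: 'p set) \<in> ?A"
  proof -
    have "OutSet G P = UNIV" if "card P = card (UNIV :: 'p set)" for P
      using that card_eq_UNIV_imp_eq_UNIV OutSet_UNIV_of_graph[OF assms(1)] by fastforce
    then show ?thesis
      by (auto simp: Suc_leI finite_UNIV_card_ge_0)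
  qed
  moreover have "finite ?A"
    by (rule finite_subset[of _ "{..card (UNIV :: 'p set)}"]) auto
  ultimately have "Min ?A \<in> ?A"
    using Min_in by blast
  then show ?thesis
    using assms(2) unfolding eqdom_def by blast
qed

lemma card_range_Min_In_le:
  fixes x :: "'p::finite \<Rightarrow> 'v::linorder"
  assumes graph: "is_graph H"
    and dominating: "\<And>P. card P = k \<Longrightarrow> OutSet H P = UNIV"
  shows "card (range (\<lambda>p. Min (x ` In H p))) \<le> k"
proof (rule ccontr)
  define d where "d p = Min (x ` In H p)" for p
  have d_heard: "d p \<le> x q" if "q \<in> In H p" for p q
    unfolding d_def using that by (intro Min_le) auto
  have d_input: "d p \<in> range x" for p
    unfolding d_def using graph by (rule Min_In_mem_range)
  assume "\<not> card (range d) \<le> k"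
  then have "card (range d - {Max (range d)}) \<ge> k"
    by (simp add: card_Diff_singleton)
  then obtain V where V: "V \<subseteq> range d - {Max (range d)}" "card V = k"
    using obtain_subset_with_card_n by metis
  have V_inputs: "V \<subseteq> range x"
    using V(1) d_input by blast
  define P where "P = inv_into UNIV x ` V"
  have "card P = k"
    unfolding P_def using V(2) inj_on_inv_into[OF V_inputs] by (simp add: card_image)
  have "Max (range d) \<in> range d"
    by (intro Max_in) auto
  then obtain p where p: "d p = Max (range d)"
    by (metis rangeE)
  from \<open>card P = k\<close> have "OutSet H P = UNIV"
    by (rule dominating)
  then obtain v where v: "v \<in> V" "inv_into UNIV x v \<in> In H p"
    unfolding OutSet_def Out_def In_def P_def by blast
  have "x (inv_into UNIV x v) = v"
    using v(1) V_inputs by (auto intro: f_inv_into_f)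
  then have "Max (range d) \<le> v"
    using d_heard[OF v(2)] p by simp
  moreover have "v \<in> range d" "v \<noteq> Max (range d)"
    using v(1) V(1) by auto
  ultimately show False
    using Max_ge[of "range d" v] by (simp add: antisym)
qed

definition decide_min_heard :: "'p \<Rightarrow> ('p \<Rightarrow> 'v option) \<Rightarrow> 'v::linorder" where
  "decide_min_heard p v = Min {a. Some a \<in> range v}"

lemma decide_min_heard_view1:
  "decide_min_heard p (view1 H x p) = Min (x ` In H p)"
proof -
  have "{a. Some a \<in> range (view1 H x p)} = x ` In H p"
    unfolding view1_def by (auto split: if_splits)
  then show ?thesis
    unfolding decide_min_heard_def by simp
qed

theorem theorem2:
  fixes S :: "('p::finite) graph set"
  assumes "S \<noteq> {}"
    and "\<forall>G\<in>S. is_graph G"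
  shows "kset_solvable_one_round (eqdom_set S) (closed_above_model S) TYPE('v::linorder)"
  unfolding kset_solvable_one_round_def
proof (intro exI[of _ decide_min_heard] ballI allI conjI)
  fix \<sigma> and x :: "'p \<Rightarrow> 'v"
  assume "\<sigma> \<in> closed_above_model S"
  then obtain G where G: "G \<in> S" "\<sigma> 0 \<in> up G"
    unfolding closed_above_model_def by blast
  then have graph: "is_graph (\<sigma> 0)" and "G \<subseteq> \<sigma> 0"
    by (auto simp: up_def)
  show "decide_min_heard p (view1 (\<sigma> 0) x p) \<in> range x" for p
    unfolding decide_min_heard_view1 using graph by (rule Min_In_mem_range)
  have "OutSet (\<sigma> 0) P = UNIV" if "card P = eqdom G" for P
    using eqdom_dominating[OF _ that] OutSet_mono[OF \<open>G \<subseteq> \<sigma> 0\<close>] assms(2) G(1) by blast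
  then have "card (range (\<lambda>p. decide_min_heard p (view1 (\<sigma> 0) x p))) \<le> eqdom G"
    unfolding decide_min_heard_view1 using card_range_Min_In_le[OF graph] by blast
  also have "eqdom G \<le> eqdom_set S"
    unfolding eqdom_set_def using G(1) by (intro Max_ge) auto
  finally show "card (range (\<lambda>p. decide_min_heard p (view1 (\<sigma> 0) x p))) \<le> eqdom_set S" .
qed

end
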